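(* Let $U=2^J\cdot3^3$ with $5\le J\ll1$ and $W=U\prod_{5\le p\le w}p$ with $10^{10^{10}}\le w\ll1$, let $b$ be an integer such that $Wn+b$ is amenable, let $Q\ge1$, and let $\mathcal{Q}=\{c_0\bmod Q:\ (Wc_0+b,Q)=(Wc_0+b-1,s(Q))=1\}$. Let $a$ and $q\mid Q$ be positive integers with $(a,q)=1$ and $q\ne1$. Then $$\Bigg|\sum_{c_0\in\mathcal{Q}}e\Big(\frac aqc_0\Big)\Bigg|\le w^{-1/2}|\mathcal{Q}|.$$
   Context: $e(t)=e^{2\pi it}$. $s(n)=\prod_{p\mid n,\ p\equiv-1\ (4),\ p\ne3}p$. A linear polynomial $Kn+b$ ($K\ge1$) is amenable if (i) $6^3\mid K$; (ii) $(b,K)=(b-1,s(K))=1$; (iii) $b-1=2^j3^{2t}(4h+1)$ for some $h\in\mathbb{Z}$ with $3\nmid4h+1$ and $j,t\ge0$ with $2^{j+2}3^{2t+1}\mid K$. *)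

theory Defs
  imports "HOL-Analysis.Analysis"
begin

definition e :: "real \<Rightarrow> complex" where
  "e t = exp (2 * pi * \<i> * complex_of_real t)"

definition s :: "nat \<Rightarrow> nat" where
  "s n = (\<Prod>p\<in>{p. prime p \<and> p dvd n \<and> p mod 4 = 3 \<and> p \<noteq> 3}. p)"

text \<open>The linear polynomial K n + b is amenable\<close>
definition amenable :: "nat \<Rightarrow> int \<Rightarrow> bool" where
  "amenable K b \<longleftrightarrow> K \<ge> 1 \<and> (6::nat)^3 dvd K \<and>
     coprime b (int K) \<and> coprime (b - 1) (int (s K)) \<and>
     (\<exists>h::int. \<exists>j t::nat. b - 1 = 2^j * 3^(2*t) * (4*h + 1) \<and> \<not> (3 dvd (4*h + 1))
        \<and> (2::nat)^(j+2) * 3^(2*t+1) dvd K)"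

definition bigW :: "nat \<Rightarrow> real \<Rightarrow> nat" where
  "bigW J w = 2^J * 3^3 * (\<Prod>p\<in>{p. prime p \<and> 5 \<le> p \<and> real p \<le> w}. p)"

definition resset :: "nat \<Rightarrow> int \<Rightarrow> nat \<Rightarrow> nat set" where
  "resset W b Q = {c0 \<in> {0..<Q}. coprime (int W * int c0 + b) (int Q)
                      \<and> coprime (int W * int c0 + b - 1) (int (s Q))}"

end

theory Submission
  imports Defs "HOL-Number_Theory.Cong"
begin

text \<open>
  Choose a prime p dividing q and a shift t, a multiple of q/p, with q not dividing a t but
  with every other prime divisor r of Q dividing W t. Shifting c0 by t modulo Q preserves the
  local conditions defining the residue set at every prime r different from p and multiplies
  the exponential sum by e(a t/q), which is not 1. If p divides W t as well, the whole residue
  set is shift invariant and the sum vanishes. Otherwise p does not divide W, hence p > w, and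
  the sum over the larger set T cut out only by the conditions at the primes r different from p
  vanishes. The sum over the residue set S then has modulus at most |T - S|, and as along each
  progression c, c + t, ..., c + (p - 1) t the condition at p fails at most twice,
  p |T - S| \<le> 2 |T|.
\<close>

lemma e_add: "e (x + y) = e x * e y"
  unfolding e_def by (simp add: distrib_left exp_add)

lemma norm_e [simp]: "cmod (e x) = 1"
  unfolding e_def by (simp add: norm_exp)

lemma e_eq_1_iff: "e x = 1 \<longleftrightarrow> x \<in> \<int>"
  unfolding e_def exp_eq_1 by (auto simp: Ints_def)

lemma e_minus_of_int [simp]: "e (x - of_int n) = e x"
proof -
  have "e (- of_int n) = 1"
    by (simp add: e_eq_1_iff)
  then show ?thesis
    using e_add[of x "- of_int n"] by simp
qed

lemma coprime_iff_no_common_prime_divisor_nat: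
  "coprime (m::nat) n \<longleftrightarrow> (\<forall>r. prime r \<longrightarrow> r dvd n \<longrightarrow> \<not> r dvd m)"
proof
  show "\<forall>r. prime r \<longrightarrow> r dvd n \<longrightarrow> \<not> r dvd m" if "coprime m n"
    using that by (meson not_coprimeI not_prime_unit)
  show "coprime m n" if "\<forall>r. prime r \<longrightarrow> r dvd n \<longrightarrow> \<not> r dvd m"
  proof (rule ccontr)
    assume "\<not> coprime m n"
    then obtain r where "prime r" "r dvd gcd m n"
      using prime_factor_nat coprime_iff_gcd_eq_1 by blast
    then have "r dvd m" "r dvd n"
      by simp_all
    then show False
      using that \<open>prime r\<close> by blast
  qed
qed

lemma coprime_int_iff_no_prime_divisor:
  "coprime x (int n) \<longleftrightarrow> (\<forall>r. prime r \<longrightarrow> r dvd n \<longrightarrow> \<not> int r dvd x)"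
  by (simp add: coprime_nat_abs_left_iff[symmetric] coprime_iff_no_common_prime_divisor_nat)

lemma prime_dvd_s_iff:
  assumes "n > 0" "prime r"
  shows "r dvd s n \<longleftrightarrow> r dvd n \<and> r mod 4 = 3 \<and> r \<noteq> 3"
proof -
  let ?P = "{p. prime p \<and> p dvd n \<and> p mod 4 = 3 \<and> p \<noteq> 3}"
  have "?P \<subseteq> {..n}"
    using assms(1) by (auto dest: dvd_imp_le)
  then have "finite ?P"
    using finite_subset by blast
  then have "r dvd s n \<longleftrightarrow> (\<exists>p\<in>?P. r dvd p)"
    unfolding s_def using assms(2) by (rule prime_dvd_prod_iff)
  also have "\<dots> \<longleftrightarrow> r \<in> ?P"
    using assms(2) by (auto dest: primes_dvd_imp_eq)
  finally show ?thesis using assms(2) by simp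
qed

definition admissible_at :: "nat \<Rightarrow> int \<Rightarrow> bool" where
  "admissible_at r x \<longleftrightarrow> \<not> int r dvd x \<and> (r mod 4 = 3 \<and> r \<noteq> 3 \<longrightarrow> \<not> int r dvd x - 1)"

lemma admissible_at_cong:
  assumes "[x = y] (mod int r)"
  shows "admissible_at r x \<longleftrightarrow> admissible_at r y"
  using cong_dvd_iff[OF assms] cong_dvd_iff[OF cong_diff[OF assms cong_refl[of 1]]]
  unfolding admissible_at_def by blast

definition sifted :: "nat \<Rightarrow> int \<Rightarrow> nat \<Rightarrow> nat set \<Rightarrow> nat set" where
  "sifted W b Q P = {c \<in> {0..<Q}. \<forall>r\<in>P. admissible_at r (int W * int c + b)}"

lemma resset_eq_sifted:
  assumes "Q > 0"
  shows "resset W b Q = sifted W b Q {r. prime r \<and> r dvd Q}"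
proof -
  have "coprime x (int Q) \<and> coprime (x - 1) (int (s Q)) \<longleftrightarrow>
      (\<forall>r\<in>{r. prime r \<and> r dvd Q}. admissible_at r x)" for x
    using prime_dvd_s_iff[OF assms]
    by (auto simp: coprime_int_iff_no_prime_divisor admissible_at_def)
  then show ?thesis
    unfolding resset_def sifted_def by simp
qed

lemma cong_shift_mod:
  fixes W Q c u r :: nat and b :: int
  assumes "r dvd Q"
  shows "[int W * int ((c + u) mod Q) + b = int W * int c + b + int W * int u] (mod int r)"
proof -
  have "[(c + u) mod Q = c + u] (mod r)"
    using assms by (simp add: cong_def mod_mod_cancel)
  then have "[int ((c + u) mod Q) = int c + int u] (mod int r)"
    by (simp add: cong_int_iff[symmetric])
  then have "[int W * int ((c + u) mod Q) = int W * (int c + int u)] (mod int r)"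
    by (rule cong_scalar_left)
  then have "[int W * int ((c + u) mod Q) + b = int W * (int c + int u) + b] (mod int r)"
    by (rule cong_add) (rule cong_refl)
  then show ?thesis
    by (simp add: algebra_simps)
qed

lemma sifted_shift_mod_iff:
  assumes "c < Q" "\<And>r. r \<in> P \<Longrightarrow> r dvd Q" "\<And>r. r \<in> P \<Longrightarrow> r dvd W * u"
  shows "(c + u) mod Q \<in> sifted W b Q P \<longleftrightarrow> c \<in> sifted W b Q P"
proof -
  have "admissible_at r (int W * int ((c + u) mod Q) + b) \<longleftrightarrow> admissible_at r (int W * int c + b)"
    if "r \<in> P" for r
  proof (rule admissible_at_cong)
    have "[int W * int u = 0] (mod int r)"
      using assms(3)[OF that] by (simp add: cong_0_iff flip: of_nat_mult)
    then have "[int W * int c + b + int W * int u = int W * int c + b] (mod int r)"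
      using cong_add_lcancel_0 by blast
    then show "[int W * int ((c + u) mod Q) + b = int W * int c + b] (mod int r)"
      by (rule cong_trans[OF cong_shift_mod[OF assms(2)[OF that]]])
  qed
  then show ?thesis
    using assms(1) by (simp add: sifted_def)
qed

lemma bij_betw_shift_mod:
  fixes A :: "nat set"
  assumes "A \<subseteq> {0..<Q}" "\<And>c. c < Q \<Longrightarrow> (c + t) mod Q \<in> A \<longleftrightarrow> c \<in> A"
  shows "bij_betw (\<lambda>c. (c + t) mod Q) A A"
proof -
  have "inj_on (\<lambda>c. (c + t) mod Q) A"
  proof (rule inj_onI)
    fix x y assume "x \<in> A" "y \<in> A" "(x + t) mod Q = (y + t) mod Q"
    then have "[x = y] (mod Q)"
      by (simp add: cong_def[symmetric] cong_add_rcancel_nat)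
    moreover have "x < Q" "y < Q"
      using assms(1) \<open>x \<in> A\<close> \<open>y \<in> A\<close> by auto
    ultimately show "x = y" by (rule cong_less_modulus_unique_nat)
  qed
  moreover have "(\<lambda>c. (c + t) mod Q) ` A \<subseteq> A"
    using assms by auto
  moreover have "finite A"
    using assms(1) finite_subset by blast
  ultimately show ?thesis
    by (simp add: bij_betw_def endo_inj_surj)
qed

lemma sum_e_eq_0_if_shift_invariant:
  fixes A :: "nat set" and a q Q t :: nat
  assumes "A \<subseteq> {0..<Q}" "q dvd Q" "\<And>c. c < Q \<Longrightarrow> (c + t) mod Q \<in> A \<longleftrightarrow> c \<in> A"
    and "\<not> q dvd a * t"
  shows "(\<Sum>c\<in>A. e (real a / real q * real c)) = 0"
proof (cases "Q = 0")
  case True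
  then show ?thesis using assms(1) by simp
next
  case False
  then have "q > 0" using assms(2) by (auto intro: Nat.gr0I)
  define f where "f c = e (real a / real q * real c)" for c
  define z where "z = e (real a / real q * real t)"
  have shift: "f ((c + t) mod Q) = z * f c" for c
  proof -
    have "c + t = q * (Q div q) * ((c + t) div Q) + (c + t) mod Q"
      using assms(2) by simp
    then have "real ((c + t) mod Q) = real c + real t - real q * real (Q div q) * real ((c + t) div Q)"
      by (metis add_diff_cancel_left' of_nat_add of_nat_mult)
    then have "real a / real q * real ((c + t) mod Q) = real a / real q * real c + real a / real q * real t
        - of_int (int (a * (Q div q) * ((c + t) div Q)))"
      using \<open>q > 0\<close> by (simp add: field_simps) (metis distrib_left)
    then show ?thesis
      unfolding f_def z_def by (simp only: e_minus_of_int e_add mult.commute)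
  qed
  have "z \<noteq> 1"
  proof
    assume "z = 1"
    then have "real a / real q * real t \<in> \<int>"
      by (simp add: z_def e_eq_1_iff)
    moreover have "real a / real q * real t = of_int (int (a * t)) / of_int (int q)"
      by simp
    ultimately have "real_of_int (int (a * t)) / real_of_int (int q) \<in> \<int>"
      by (simp only:)
    then have "int q dvd int (a * t)"
      using \<open>q > 0\<close> by (simp only: of_int_div_of_int_in_Ints_iff) simp
    then show False
      using assms(4) by (simp flip: of_nat_mult)
  qed
  have "sum f A = (\<Sum>c\<in>A. f ((c + t) mod Q))"
    using sum.reindex_bij_betw[OF bij_betw_shift_mod[OF assms(1,3)], of f] by simp
  also have "\<dots> = z * sum f A"
    by (simp add: shift sum_distrib_left)
  finally show ?thesis
    using \<open>z \<noteq> 1\<close> unfolding f_def by (metis mult_cancel_right1)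
qed

lemma card_dvd_affine_le_1:
  fixes p :: nat and X Y :: int
  assumes "prime p" "\<not> int p dvd Y"
  shows "card {j \<in> {..<p}. int p dvd X + int j * Y} \<le> 1"
proof -
  have "coprime Y (int p)"
    using assms prime_imp_coprime[of "int p" Y] by (simp add: coprime_commute)
  have "j1 = j2" if "j1 \<in> {j \<in> {..<p}. int p dvd X + int j * Y}"
    and "j2 \<in> {j \<in> {..<p}. int p dvd X + int j * Y}" for j1 j2
  proof -
    have "[X + int j1 * Y = 0] (mod int p)" "[X + int j2 * Y = 0] (mod int p)"
      using that by (simp_all add: cong_0_iff)
    then have "[X + int j1 * Y = X + int j2 * Y] (mod int p)"
      by (rule cong_trans[OF _ cong_sym])
    then have "[int j1 = int j2] (mod int p)"
      using \<open>coprime Y (int p)\<close> by (simp add: cong_add_lcancel cong_mult_rcancel)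
    then have "[j1 = j2] (mod p)"
      by (simp add: cong_int_iff)
    then show "j1 = j2"
      using that by (auto intro: cong_less_modulus_unique_nat)
  qed
  then show ?thesis
    by (simp add: card_le_Suc0_iff_eq)
qed

lemma card_not_admissible_at_le_2:
  fixes p :: nat and X Y :: int
  assumes "prime p" "\<not> int p dvd Y"
  shows "card {j \<in> {..<p}. \<not> admissible_at p (X + int j * Y)} \<le> 2"
proof -
  have "{j \<in> {..<p}. \<not> admissible_at p (X + int j * Y)} \<subseteq>
      {j \<in> {..<p}. int p dvd X + int j * Y} \<union> {j \<in> {..<p}. int p dvd (X - 1) + int j * Y}"
    by (auto simp: admissible_at_def algebra_simps)
  then have "card {j \<in> {..<p}. \<not> admissible_at p (X + int j * Y)} \<le>
      card ({j \<in> {..<p}. int p dvd X + int j * Y} \<union> {j \<in> {..<p}. int p dvd (X - 1) + int j * Y})"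
    by (rule card_mono[rotated]) simp
  also have "\<dots> \<le> card {j \<in> {..<p}. int p dvd X + int j * Y} + card {j \<in> {..<p}. int p dvd (X - 1) + int j * Y}"
    by (rule card_Un_le)
  finally show ?thesis
    using card_dvd_affine_le_1[OF assms, of X] card_dvd_affine_le_1[OF assms, of "X - 1"] by linarith
qed

lemma double_counting_card_le:
  fixes g :: "nat \<Rightarrow> 'a \<Rightarrow> 'a"
  assumes "finite T" "B \<subseteq> T" "\<And>j. j < n \<Longrightarrow> bij_betw (g j) T T"
    and "\<And>c. c \<in> T \<Longrightarrow> card {j. j < n \<and> g j c \<in> B} \<le> k"
  shows "n * card B \<le> k * card T"
proof -
  have "card B = (\<Sum>c\<in>T. of_bool (g j c \<in> B))" if "j < n" for j
  proof -
    have "card B = (\<Sum>c\<in>T. of_bool (c \<in> B))"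
      using assms(1,2) by (simp add: Int_absorb1 flip: sum.inter_restrict)
    also have "\<dots> = (\<Sum>c\<in>T. of_bool (g j c \<in> B))"
      using sum.reindex_bij_betw[OF assms(3)[OF that], of "\<lambda>c. of_bool (c \<in> B) :: nat"] by simp
    finally show ?thesis .
  qed
  then have "(\<Sum>j<n. \<Sum>c\<in>T. of_bool (g j c \<in> B)) = (\<Sum>j<n. card B)"
    by (intro sum.cong) simp_all
  then have "n * card B = (\<Sum>j<n. \<Sum>c\<in>T. of_bool (g j c \<in> B))"
    by simp
  also have "\<dots> = (\<Sum>c\<in>T. card {j. j < n \<and> g j c \<in> B})"
    by (subst sum.swap) (simp add: sum.inter_restrict[symmetric] Int_def lessThan_def conj_commute)
  also have "\<dots> \<le> k * card T"
    using sum_bounded_above[of T "\<lambda>c. card {j. j < n \<and> g j c \<in> B}" k] assms(4)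
    by (simp add: mult.commute)
  finally show ?thesis .
qed

lemma norm_sum_le_card_diff:
  fixes f :: "'a \<Rightarrow> 'b::real_normed_vector"
  assumes "finite T" "S \<subseteq> T" "sum f T = 0" "\<And>c. norm (f c) \<le> 1"
  shows "norm (sum f S) \<le> card (T - S)"
proof -
  have "sum f S + sum f (T - S) = 0"
    using sum.subset_diff[OF assms(2,1), of f] assms(3) by (simp add: add.commute)
  then have "sum f S = - sum f (T - S)"
    by (simp add: eq_neg_iff_add_eq_0)
  then have "norm (sum f S) \<le> (\<Sum>c\<in>T - S. norm (f c))"
    by (simp add: norm_sum)
  also have "\<dots> \<le> card (T - S)"
    using sum_bounded_above[of "T - S" "\<lambda>c. norm (f c)" 1] assms(4) by simp
  finally show ?thesis .
qed

lemma exists_shift_for_prime_divisor: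
  fixes p q Q :: nat
  assumes "prime p" "p dvd q" "q dvd Q" "Q > 0"
  obtains t where "\<not> q dvd t" "\<And>r. prime r \<Longrightarrow> r dvd Q \<Longrightarrow> r \<noteq> p \<Longrightarrow> r dvd t"
proof
  define N where "N = (\<Prod>r\<in>prime_factors Q - {p}. r)"
  define t where "t = q div p * N"
  have "q > 0"
    using assms(3,4) dvd_pos_nat by blast
  have "p \<le> q"
    using assms(2) \<open>q > 0\<close> by (rule dvd_imp_le)
  then have q: "q = q div p * p" "q div p > 0"
    using assms(1,2) by (simp_all add: div_greater_zero_iff prime_gt_0_nat)
  have "p dvd N \<longleftrightarrow> (\<exists>r\<in>prime_factors Q - {p}. p dvd r)"
    unfolding N_def using assms(1) by (intro prime_dvd_prod_iff) simp_all
  then have "\<not> p dvd N"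
    using assms(1) by (auto simp: in_prime_factors_iff dest: primes_dvd_imp_eq)
  show "\<not> q dvd t"
  proof
    assume "q dvd t"
    then have "q div p * p dvd q div p * N"
      using q(1) unfolding t_def by simp
    then show False
      using q(2) \<open>\<not> p dvd N\<close> by simp
  qed
  show "r dvd t" if "prime r" "r dvd Q" "r \<noteq> p" for r
  proof -
    have "r \<in> prime_factors Q - {p}"
      using that assms(4) by (simp add: in_prime_factors_iff)
    then have "r dvd N"
      unfolding N_def using dvd_prodI[of "prime_factors Q - {p}" r "\<lambda>r. r"] by simp
    then show ?thesis
      unfolding t_def by simp
  qed
qed

lemma less_prime_if_not_dvd_bigW:
  assumes "prime p" "J > 0" "\<not> p dvd bigW J w"
  shows "w < real p"
proof (rule ccontr)
  assume "\<not> w < real p"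
  define P where "P = {p. prime p \<and> 5 \<le> p \<and> real p \<le> w}"
  have "P \<subseteq> {..nat \<lceil>w\<rceil>}"
    unfolding P_def by (auto simp: le_nat_iff) linarith
  then have "finite P"
    using finite_subset by blast
  have "p \<noteq> 4"
    using assms(1) by (auto simp: prime_nat_iff dest: spec[of _ 2])
  then have "p = 2 \<or> p = 3 \<or> p \<in> P"
    using assms(1) prime_ge_2_nat[OF assms(1)] \<open>\<not> w < real p\<close> unfolding P_def by fastforce
  moreover have "2 dvd bigW J w" "3 dvd bigW J w"
    using assms(2) by (simp_all add: bigW_def)
  moreover have "p dvd bigW J w" if "p \<in> P"
    using \<open>finite P\<close> that unfolding bigW_def P_def by (auto intro: dvd_mult)
  ultimately show False
    using assms(3) by blast
qed

lemma le_powr_neg_half_if_le: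
  fixes w p x y :: real
  assumes "16 \<le> w" "w < p" "(p - 2) * x \<le> 2 * y" "0 \<le> x"
  shows "x \<le> w powr (-1/2) * y"
proof -
  have "4 \<le> sqrt w"
    using real_sqrt_le_mono[OF assms(1)] by simp
  then have "4 * sqrt w \<le> sqrt w * sqrt w"
    by (rule mult_right_mono) (use assms(1) in simp)
  moreover have "sqrt w * sqrt w = w"
    using assms(1) by simp
  ultimately have "2 * sqrt w \<le> p - 2"
    using assms(2) \<open>4 \<le> sqrt w\<close> by linarith
  then have "2 * sqrt w * x \<le> (p - 2) * x"
    using assms(4) by (rule mult_right_mono)
  then have "sqrt w * x \<le> y"
    using assms(3) by linarith
  then have "x \<le> y / sqrt w"
    using assms(1) by (simp add: pos_le_divide_eq mult.commute)
  moreover have "w powr (-1/2) = inverse (w powr (1/2))"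
    by (simp add: powr_minus [symmetric])
  then have "w powr (-1/2) = inverse (sqrt w)"
    using assms(1) by (simp add: powr_half_sqrt)
  ultimately show ?thesis
    by (metis divide_inverse mult.commute)
qed

lemma norm_sum_e_sifted_le:
  fixes W Q a q t p :: nat and b :: int and P :: "nat set"
  assumes "q dvd Q" "\<not> q dvd a * t" "prime p" "p \<in> P"
    and "\<And>r. r \<in> P \<Longrightarrow> r dvd Q" "\<And>r. r \<in> P \<Longrightarrow> r \<noteq> p \<Longrightarrow> r dvd W * t"
    and "\<not> p dvd W * t"
  shows "(real p - 2) * cmod (\<Sum>c\<in>sifted W b Q P. e (real a / real q * real c))
           \<le> 2 * real (card (sifted W b Q P))"
proof -
  define T where "T = sifted W b Q (P - {p})"
  define S where "S = sifted W b Q P"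
  define f where "f c = e (real a / real q * real c)" for c
  define g where "g j c = (c + j * t) mod Q" for j c
  have "T \<subseteq> {0..<Q}"
    unfolding T_def sifted_def by blast
  then have "finite T"
    using finite_subset by blast
  have S_eq: "S = {c \<in> T. admissible_at p (int W * int c + b)}"
    using assms(4) unfolding S_def T_def sifted_def by blast
  then have "S \<subseteq> T"
    by blast
  have T_shift: "g j c \<in> T \<longleftrightarrow> c \<in> T" if "c < Q" for j c
    unfolding g_def T_def
  proof (rule sifted_shift_mod_iff[OF that])
    show "r dvd W * (j * t)" if "r \<in> P - {p}" for r
    proof -
      have "r dvd W * t"
        using assms(6) that by blast
      then show ?thesis
        by (metis dvd_mult mult.left_commute)
    qed
  qed (use assms(5) in blast)
  have "sum f T = 0"
    unfolding f_def using T_shift[of _ 1] g_def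
    by (intro sum_e_eq_0_if_shift_invariant[OF \<open>T \<subseteq> {0..<Q}\<close> assms(1) _ assms(2)]) simp
  then have norm_S: "cmod (sum f S) \<le> card (T - S)"
    using \<open>finite T\<close> \<open>S \<subseteq> T\<close> by (intro norm_sum_le_card_diff) (simp_all add: f_def)
  have "p * card (T - S) \<le> 2 * card T"
  proof (rule double_counting_card_le)
    show "bij_betw (g j) T T" for j
      using T_shift[of _ j] unfolding g_def by (intro bij_betw_shift_mod[OF \<open>T \<subseteq> {0..<Q}\<close>])
    have Y: "\<not> int p dvd int (W * t)"
      using assms(7) by (simp only: int_dvd_int_iff not_False_eq_True)
    have "p dvd Q"
      using assms(4,5) by blast
    show "card {j. j < p \<and> g j c \<in> T - S} \<le> 2" if "c \<in> T" for c
    proof -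
      have "\<not> admissible_at p (int W * int c + b + int j * int (W * t))" if "g j c \<in> T - S" for j
      proof -
        have "[int W * int (g j c) + b = int W * int c + b + int j * int (W * t)] (mod int p)"
          using cong_shift_mod[OF \<open>p dvd Q\<close>, of W c "j * t" b] by (simp add: g_def ac_simps)
        then show ?thesis
          using that S_eq admissible_at_cong by blast
      qed
      then have "{j. j < p \<and> g j c \<in> T - S}
          \<subseteq> {j \<in> {..<p}. \<not> admissible_at p (int W * int c + b + int j * int (W * t))}"
        by blast
      then have "card {j. j < p \<and> g j c \<in> T - S}
          \<le> card {j \<in> {..<p}. \<not> admissible_at p (int W * int c + b + int j * int (W * t))}"
        by (rule card_mono[rotated]) simp
      also have "\<dots> \<le> 2"
        by (rule card_not_admissible_at_le_2[OF assms(3) Y])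
      finally show ?thesis .
    qed
  qed (use \<open>finite T\<close> in auto)
  moreover have "card T = card S + card (T - S)"
    using \<open>finite T\<close> \<open>S \<subseteq> T\<close> by (metis card_Diff_subset card_mono finite_subset le_add_diff_inverse)
  ultimately have "(real p - 2) * card (T - S) \<le> 2 * card S"
    by (simp add: algebra_simps flip: of_nat_mult of_nat_add)
  moreover have "(real p - 2) * cmod (sum f S) \<le> (real p - 2) * card (T - S)"
    using norm_S prime_ge_2_nat[OF assms(3)] by (intro mult_left_mono) simp_all
  ultimately show ?thesis
    unfolding S_def f_def by linarith
qed

lemma norm_sum_e_resset_cases:
  fixes W Q a q :: nat and b :: int
  assumes "Q > 0" "q dvd Q" "coprime a q" "q \<noteq> 1"
  obtains (vanishes) "(\<Sum>c\<in>resset W b Q. e (real a / real q * real c)) = 0"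
  | (bounded) p where "prime p" "\<not> p dvd W"
    "(real p - 2) * cmod (\<Sum>c\<in>resset W b Q. e (real a / real q * real c))
       \<le> 2 * real (card (resset W b Q))"
proof -
  define P where "P = {r. prime r \<and> r dvd Q}"
  obtain p where "prime p" "p dvd q"
    using prime_factor_nat assms(4) by blast
  then have "p \<in> P"
    unfolding P_def using assms(2) by (blast intro: dvd_trans)
  obtain t where "\<not> q dvd t" and t: "\<And>r. prime r \<Longrightarrow> r dvd Q \<Longrightarrow> r \<noteq> p \<Longrightarrow> r dvd t"
    using exists_shift_for_prime_divisor[OF \<open>prime p\<close> \<open>p dvd q\<close> assms(2,1)] by blast
  then have "\<not> q dvd a * t"
    using assms(3) by (simp add: coprime_commute coprime_dvd_mult_right_iff)
  have P_dvd: "r dvd Q" and P_other: "r \<noteq> p \<Longrightarrow> r dvd W * t" if "r \<in> P" for r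
    using t that unfolding P_def by auto
  have resset: "resset W b Q = sifted W b Q P"
    unfolding P_def by (rule resset_eq_sifted[OF assms(1)])
  show thesis
  proof (cases "p dvd W * t")
    case True
    then have "r dvd W * t" if "r \<in> P" for r
      using P_other that by (cases "r = p") auto
    then have "(\<Sum>c\<in>resset W b Q. e (real a / real q * real c)) = 0"
      unfolding resset using P_dvd
      by (intro sum_e_eq_0_if_shift_invariant[OF _ assms(2) _ \<open>\<not> q dvd a * t\<close>]
          sifted_shift_mod_iff) (auto simp: sifted_def)
    then show thesis
      by (rule that(1))
  next
    case False
    have "(real p - 2) * cmod (\<Sum>c\<in>sifted W b Q P. e (real a / real q * real c))
        \<le> 2 * real (card (sifted W b Q P))"
      using P_dvd P_other False
      by (rule norm_sum_e_sifted_le[OF assms(2) \<open>\<not> q dvd a * t\<close> \<open>prime p\<close> \<open>p \<in> P\<close>])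
    moreover have "\<not> p dvd W"
      using False by auto
    ultimately show thesis
      using that(2)[OF \<open>prime p\<close>] unfolding resset by blast
  qed
qed

theorem lemma4:
  fixes J Q a q :: nat and w :: real and b :: int
  assumes "5 \<le> J"
    and "(10::real) ^ (10 ^ 10) \<le> w"
    and "amenable (bigW J w) b"
    and "Q \<ge> 1"
    and "a > 0" and "q > 0" and "q dvd Q" and "coprime a q" and "q \<noteq> 1"
  shows "cmod (\<Sum>c0\<in>resset (bigW J w) b Q. e (real a / real q * real c0))
           \<le> w powr (-1/2) * real (card (resset (bigW J w) b Q))"
proof -
  have "(16::real) \<le> 10 ^ 2"
    by simp
  also have "\<dots> \<le> 10 ^ (10 ^ 10)"
    by (rule power_increasing) simp_all
  finally have "16 \<le> w"
    using assms(2) by linarith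
  from assms(4) have "Q > 0"
    by simp
  from this assms(7,8,9) show ?thesis
  proof (cases rule: norm_sum_e_resset_cases[where W = "bigW J w" and b = b])
    case vanishes
    then show ?thesis
      by simp
  next
    case (bounded p)
    then have "w < real p"
      using assms(1) by (intro less_prime_if_not_dvd_bigW) simp_all
    then show ?thesis
      by (rule le_powr_neg_half_if_le[OF \<open>16 \<le> w\<close> _ bounded(3) norm_ge_zero])
  qed
qed

end
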